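(* Let $A\in\mathbb{R}^{n\times n}$ and $b\in\mathbb{R}^n$, and consider the generalized Newton method (GNM) for the absolute value equation $Ax-|x|-b=0$: starting from an arbitrary $x^0\in\mathbb{R}^n$, compute $x^{k+1}=[A-\mathcal{D}(x^k)]^{-1}b$ for $k=0,1,2,\dots$. Suppose that $A$ satisfies either (a) $A-I$ is an $M$-matrix, or (b) $\mathcal{N}(A^\top-I)=\mathrm{span}(v)$ for some vector $v>0$, and $A-I+D$ is an $M$-matrix for every diagonal matrix $D=\mathrm{diag}(d)$ with $d\ge 0$ and $d\neq 0$. If $A$ satisfies (b), assume in addition that $\mathcal{D}(x^0)\neq I$ and $v^\top b<0$. Then $A-\mathcal{D}(x^k)$ is an $M$-matrix for every $k=0,1,2,\dots$, and hence the GNM iteration is well defined.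
   Context: For $x\in\mathbb{R}^n$, $|x|=(|x_1|,\dots,|x_n|)^\top$, and $\mathcal{D}(x)=\mathrm{diag}(\mathrm{sign}(x))$, where $\mathrm{sign}(x)$ is the vector whose $i$th component is $-1$, $0$, or $1$ according as $x_i<0$, $x_i=0$, or $x_i>0$. A matrix is a $Z$-matrix if all its off-diagonal entries are $\le 0$; a $Z$-matrix $A$ is an $M$-matrix if $A$ is nonsingular and $A^{-1}\ge 0$ (entrywise). Vector and matrix inequalities are entrywise; $v>0$ means all entries of $v$ are strictly positive. $\mathcal{N}(X)$ denotes the null space of $X$. *)

theory Defs
  imports "HOL-Analysis.Analysis"
begin

definition diag_mat :: "real^'n \<Rightarrow> real^'n^'n" where
  "diag_mat d = (\<chi> i j. if i = j then d $ i else 0)"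

definition sign_vec :: "real^'n \<Rightarrow> real^'n" where
  "sign_vec x = (\<chi> i. sgn (x $ i))"

definition Dsign :: "real^'n \<Rightarrow> real^'n^'n" where
  "Dsign x = diag_mat (sign_vec x)"

definition Z_matrix :: "real^'n^'n \<Rightarrow> bool" where
  "Z_matrix A \<longleftrightarrow> (\<forall>i j. i \<noteq> j \<longrightarrow> A $ i $ j \<le> 0)"

definition M_matrix :: "real^'n^'n \<Rightarrow> bool" where
  "M_matrix A \<longleftrightarrow> Z_matrix A \<and> invertible A \<and> (\<forall>i j. matrix_inv A $ i $ j \<ge> 0)"

definition null_space :: "real^'n^'n \<Rightarrow> (real^'n) set" where
  "null_space X = {y. X *v y = 0}"

end

theory Submission
  imports Defs
begin

text \<open>
  Writing \<open>A - \<D>(x) = (A - I) + diag(1 - sign x)\<close> with \<open>1 - sign x \<ge> 0\<close>, everything reduces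
  to perturbing \<open>A - I\<close> by nonnegative diagonal matrices. A Z-matrix \<open>B\<close> admitting some
  \<open>u > 0\<close> with \<open>B u > 0\<close> is an M-matrix (minimum principle: \<open>B z \<ge> 0\<close> forces \<open>z \<ge> 0\<close>), and
  for an M-matrix \<open>M\<close> the vector \<open>u = M\<^sup>-\<^sup>1 1\<close> is such a witness for \<open>M + diag d\<close>; this settles
  case (a). In case (b) it suffices that \<open>\<D>(x\<^sup>k) \<noteq> I\<close> for all \<open>k\<close>. If \<open>x\<^sup>k\<^sup>+\<^sup>1 > 0\<close>, then
  \<open>v\<^sup>T(A - I) = 0\<close> gives \<open>v\<^sup>T b = v\<^sup>T diag(1 - sign x\<^sup>k) x\<^sup>k\<^sup>+\<^sup>1 \<ge> 0\<close>, contradicting \<open>v\<^sup>T b < 0\<close>.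
\<close>

lemma matrix_inv_right:
  fixes A :: "real^'n^'n"
  assumes "invertible A"
  shows "A ** matrix_inv A = mat 1"
  using someI_ex[OF assms[unfolded invertible_def]] unfolding matrix_inv_def by blast

lemma matrix_inv_left:
  fixes A :: "real^'n^'n"
  assumes "invertible A"
  shows "matrix_inv A ** A = mat 1"
  using someI_ex[OF assms[unfolded invertible_def]] unfolding matrix_inv_def by blast

lemma diag_mat_mult_vec: "(diag_mat d *v u) $ i = d $ i * u $ i"
proof -
  have "(diag_mat d *v u) $ i = (\<Sum>k\<in>UNIV. (if i = k then d $ i else 0) * u $ k)"
    by (simp add: matrix_vector_mult_def diag_mat_def)
  also have "\<dots> = (\<Sum>k\<in>UNIV. if k = i then d $ i * u $ k else 0)"
    by (rule sum.cong) auto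
  finally show ?thesis by simp
qed

lemma Z_matrix_minimum_principle:
  fixes B :: "real^'n^'n"
  assumes Z: "Z_matrix B" and u: "\<forall>i. u $ i > 0" and Bu: "\<forall>i. (B *v u) $ i > 0"
    and Bz: "\<forall>i. (B *v z) $ i \<ge> 0"
  shows "z $ j \<ge> 0"
proof -
  \<comment> \<open>\<open>t\<close> is the largest scalar with \<open>t u \<le> z\<close>; the row where it is attained forces \<open>t \<ge> 0\<close>\<close>
  define t where "t = Min (range (\<lambda>k. z $ k / u $ k))"
  have "t \<in> range (\<lambda>k. z $ k / u $ k)"
    unfolding t_def by (intro Min_in) auto
  then obtain i where ti: "t = z $ i / u $ i" by auto
  have t_le: "t * u $ k \<le> z $ k" for k
  proof -
    have "t \<le> z $ k / u $ k"
      unfolding t_def by (intro Min_le) auto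
    then show ?thesis using u by (simp add: pos_le_divide_eq)
  qed
  have zi: "z $ i = t * u $ i"
    using u[rule_format, of i] by (simp add: ti)
  have "t \<ge> 0"
  proof (rule ccontr)
    assume "\<not> t \<ge> 0"
    have row_le: "B $ i $ k * z $ k \<le> t * (B $ i $ k * u $ k)" for k
    proof (cases "k = i")
      case False
      then have "B $ i $ k \<le> 0" using Z unfolding Z_matrix_def by auto
      then have "B $ i $ k * z $ k \<le> B $ i $ k * (t * u $ k)"
        by (rule mult_left_mono_neg[OF t_le])
      then show ?thesis by (simp add: algebra_simps)
    qed (simp add: zi)
    have "(B *v z) $ i \<le> (\<Sum>k\<in>UNIV. t * (B $ i $ k * u $ k))"
      unfolding matrix_vector_mult_def by (simp add: sum_mono row_le)
    also have "\<dots> = t * (B *v u) $ i"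
      by (simp add: matrix_vector_mult_def sum_distrib_left)
    also have "\<dots> < 0"
      using \<open>\<not> t \<ge> 0\<close> Bu by (simp add: mult_neg_pos)
    finally show False using Bz by (meson not_le)
  qed
  then show ?thesis using t_le[of j] u by (meson order_trans zero_le_mult_iff less_imp_le)
qed

lemma M_matrix_if_Z_matrix_semipositive:
  fixes B :: "real^'n^'n"
  assumes Z: "Z_matrix B" and u: "\<forall>i. u $ i > 0" and Bu: "\<forall>i. (B *v u) $ i > 0"
  shows "M_matrix B"
proof -
  note nonneg = Z_matrix_minimum_principle[OF Z u Bu]
  have inv: "invertible B"
    unfolding invertible_left_inverse matrix_left_invertible_ker
  proof (intro allI impI)
    fix z assume "B *v z = 0"
    then have "B *v (- z) = 0"
      by (metis matrix_vector_mult_diff_distrib diff_0 diff_self)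
    then have "z $ j \<ge> 0" "(- z) $ j \<ge> 0" for j
      using nonneg[of z] nonneg[of "- z"] \<open>B *v z = 0\<close> by simp_all
    then show "z = 0" by (simp add: vec_eq_iff order_antisym)
  qed
  have "matrix_inv B $ i $ j \<ge> 0" for i j
  proof -
    have "B *v (matrix_inv B *v axis j 1) = axis j 1"
      by (simp add: matrix_vector_mul_assoc matrix_inv_right[OF inv])
    then have "(matrix_inv B *v axis j 1) $ i \<ge> 0"
      using nonneg by (simp add: axis_def)
    then show ?thesis by (simp add: matrix_vector_mult_basis column_def)
  qed
  with Z inv show ?thesis unfolding M_matrix_def by blast
qed

lemma M_matrix_semipositive:
  fixes M :: "real^'n^'n"
  assumes M: "M_matrix M"
  obtains u where "\<forall>i. u $ i > 0" and "M *v u = (\<chi> i. 1)"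
proof
  have inv: "invertible M" and nn: "\<forall>i j. matrix_inv M $ i $ j \<ge> 0"
    using M unfolding M_matrix_def by auto
  define u where "u = matrix_inv M *v (\<chi> i. 1)"
  show "M *v u = (\<chi> i. 1)"
    unfolding u_def by (simp add: matrix_vector_mul_assoc matrix_inv_right[OF inv])
  show "\<forall>i. u $ i > 0"
  proof
    fix i
    have ui: "u $ i = (\<Sum>k\<in>UNIV. matrix_inv M $ i $ k)"
      by (simp add: u_def matrix_vector_mult_def)
    have "u $ i \<noteq> 0"
    proof
      assume "u $ i = 0"
      then have "matrix_inv M $ i $ k = 0" for k
        using ui nn sum_nonneg_eq_0_iff[of UNIV "\<lambda>k. matrix_inv M $ i $ k"] by auto
      then have "(matrix_inv M ** M) $ i $ i = 0"
        by (simp add: matrix_matrix_mult_def)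
      then show False by (simp add: matrix_inv_left[OF inv] mat_def)
    qed
    moreover have "u $ i \<ge> 0"
      unfolding ui using nn by (simp add: sum_nonneg)
    ultimately show "u $ i > 0" by simp
  qed
qed

lemma M_matrix_add_diag:
  fixes M :: "real^'n^'n"
  assumes M: "M_matrix M" and d: "\<forall>i. d $ i \<ge> 0"
  shows "M_matrix (M + diag_mat d)"
proof -
  obtain u where u: "\<forall>i. u $ i > 0" and Mu: "M *v u = (\<chi> i. 1)"
    using M_matrix_semipositive[OF M] by blast
  have "((M + diag_mat d) *v u) $ i = 1 + d $ i * u $ i" for i
    by (simp add: matrix_vector_mult_add_rdistrib Mu diag_mat_mult_vec)
  then have "\<forall>i. ((M + diag_mat d) *v u) $ i > 0"
    using d u by (simp add: add_pos_nonneg less_imp_le)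
  moreover have "Z_matrix (M + diag_mat d)"
    using M unfolding M_matrix_def Z_matrix_def diag_mat_def by auto
  ultimately show ?thesis using M_matrix_if_Z_matrix_semipositive u by blast
qed

lemma A_minus_Dsign_eq:
  fixes A :: "real^'n^'n"
  shows "A - Dsign y = (A - mat 1) + diag_mat (\<chi> i. 1 - sgn (y $ i))"
  by (simp add: Dsign_def diag_mat_def sign_vec_def mat_def vec_eq_iff)

lemma one_minus_sgn_nonneg: "\<forall>i. (\<chi> i. 1 - sgn ((y::real^'n) $ i)) $ i \<ge> 0"
  by (simp add: sgn_real_def)

lemma Dsign_eq_mat_1_iff: "Dsign y = mat 1 \<longleftrightarrow> (\<forall>i. (y::real^'n) $ i > 0)"
proof
  assume "Dsign y = mat 1"
  then have "Dsign y $ i $ i = 1" for i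
    by (simp add: mat_def)
  then have "sgn (y $ i) = 1" for i
    by (simp add: Dsign_def diag_mat_def sign_vec_def)
  then show "\<forall>i. y $ i > 0" by (simp add: sgn_1_pos)
qed (simp add: Dsign_def diag_mat_def sign_vec_def mat_def vec_eq_iff)

lemma M_matrix_A_minus_Dsign:
  fixes A :: "real^'n^'n"
  assumes "M_matrix (A - mat 1)"
  shows "M_matrix (A - Dsign y)"
  unfolding A_minus_Dsign_eq using M_matrix_add_diag[OF assms one_minus_sgn_nonneg] .

lemma M_matrix_A_minus_Dsign_if_not_positive:
  fixes A :: "real^'n^'n"
  assumes MM: "\<forall>d. (\<forall>i. d $ i \<ge> 0) \<and> d \<noteq> 0 \<longrightarrow> M_matrix (A - mat 1 + diag_mat d)"
    and y: "Dsign y \<noteq> mat 1"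
  shows "M_matrix (A - Dsign y)"
proof -
  have "(\<chi> i. 1 - sgn (y $ i)) \<noteq> (0::real^'n)"
    using y unfolding Dsign_eq_mat_1_iff by (metis sgn_1_pos eq_iff_diff_eq_0 vec_lambda_beta zero_index)
  then show ?thesis
    unfolding A_minus_Dsign_eq using MM one_minus_sgn_nonneg by blast
qed

lemma solution_not_positive_if_left_null:
  fixes A :: "real^'n^'n"
  assumes vA: "v v* (A - mat 1) = 0" and v: "\<forall>i. v $ i > 0" and vb: "v \<bullet> b < 0"
    and z: "(A - Dsign y) *v z = b"
  shows "Dsign z \<noteq> mat 1"
proof
  assume "Dsign z = mat 1"
  then have pos: "\<forall>i. z $ i > 0" by (simp add: Dsign_eq_mat_1_iff)
  define d :: "real^'n" where "d = (\<chi> i. 1 - sgn (y $ i))"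
  have "b = (A - mat 1) *v z + diag_mat d *v z"
    using z unfolding A_minus_Dsign_eq d_def by (simp add: matrix_vector_mult_add_rdistrib)
  then have "v \<bullet> b = (v v* (A - mat 1)) \<bullet> z + v \<bullet> (diag_mat d *v z)"
    by (simp add: inner_add_right dot_lmul_matrix)
  also have "\<dots> = (\<Sum>i\<in>UNIV. v $ i * (d $ i * z $ i))"
    by (simp add: vA inner_vec_def diag_mat_mult_vec)
  also have "\<dots> \<ge> 0"
    using v pos one_minus_sgn_nonneg[of y] unfolding d_def[symmetric]
    by (intro sum_nonneg) (simp add: less_imp_le)
  finally show False using vb by simp
qed

theorem lemma3p1:
  fixes A :: "real^'n^'n" and b :: "real^'n" and x :: "nat \<Rightarrow> real^'n"
  assumes GNM: "\<And>k. x (Suc k) = matrix_inv (A - Dsign (x k)) *v b"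
    and cond: "M_matrix (A - mat 1)
      \<or> (\<exists>v. null_space (transpose A - mat 1) = span {v} \<and> (\<forall>i. v $ i > 0)
             \<and> (\<forall>d. (\<forall>i. d $ i \<ge> 0) \<and> d \<noteq> 0 \<longrightarrow> M_matrix (A - mat 1 + diag_mat d))
             \<and> Dsign (x 0) \<noteq> mat 1 \<and> v \<bullet> b < 0)"
  shows "\<forall>k. M_matrix (A - Dsign (x k))"
  using cond
proof
  assume "M_matrix (A - mat 1)"
  then show ?thesis using M_matrix_A_minus_Dsign by blast
next
  assume "\<exists>v. null_space (transpose A - mat 1) = span {v} \<and> (\<forall>i. v $ i > 0)
             \<and> (\<forall>d. (\<forall>i. d $ i \<ge> 0) \<and> d \<noteq> 0 \<longrightarrow> M_matrix (A - mat 1 + diag_mat d))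
             \<and> Dsign (x 0) \<noteq> mat 1 \<and> v \<bullet> b < 0"
  then obtain v where null: "null_space (transpose A - mat 1) = span {v}" and v: "\<forall>i. v $ i > 0"
    and MM: "\<forall>d. (\<forall>i. d $ i \<ge> 0) \<and> d \<noteq> 0 \<longrightarrow> M_matrix (A - mat 1 + diag_mat d)"
    and x0: "Dsign (x 0) \<noteq> mat 1" and vb: "v \<bullet> b < 0" by blast
  have "transpose A - mat 1 = transpose (A - mat 1)"
    by (simp add: transpose_def mat_def vec_eq_iff)
  then have vA: "v v* (A - mat 1) = 0"
    using null span_base[of v "{v}"] unfolding null_space_def by auto
  have "Dsign (x k) \<noteq> mat 1" for k
  proof (induction k)
    case (Suc k)
    then have "invertible (A - Dsign (x k))"
      using M_matrix_A_minus_Dsign_if_not_positive[OF MM] M_matrix_def by blast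
    then have "(A - Dsign (x k)) *v x (Suc k) = b"
      by (simp add: GNM matrix_vector_mul_assoc matrix_inv_right)
    then show ?case using solution_not_positive_if_left_null[OF vA v vb] by blast
  qed (rule x0)
  then show ?thesis using M_matrix_A_minus_Dsign_if_not_positive[OF MM] by blast
qed

end
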